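(* Let $\mathfrak g$, $m$, $\mathbb C(y)$, $a_i(n)$ and the maps $r_i$ ($i\in S$) be as in the context, and put $X^i_n:=a_i(n)^{-1}$. Let $\mathbf Y_{\chi_\varepsilon}\subset\mathbb C(y)$ be the intersection over $i\in S$ of the subrings generated by $\{y_j(n)^{\pm1}: j\ne i,\ n\in d\mathbb Z/d'm\mathbb Z\}$ together with $\{y_i(n)(1+X^i_n): n\in d\mathbb Z/d'm\mathbb Z\}$ (the image of the $q$-character at a root of unity $q$ with $q^{2d'm}=1$). Then $\mathbf Y_{\chi_\varepsilon}$ is invariant under the action of $W(\mathfrak g)$ generated by the $r_i$: $r_i(f)=f$ for all $f\in\mathbf Y_{\chi_\varepsilon}$ and all $i\in S$.
   Context: Let $\mathfrak g$ be a finite-dimensional complex simple Lie algebra of rank $\ell$, $S=\{1,\dots,\ell\}$, of type $A_\ell$, $B_\ell$, $C_\ell$, $D_\ell$ ($\ell\ge4$), $E_{6,7,8}$, $F_4$ or $G_2$, labelled: $A_\ell,B_\ell,C_\ell$ chain $1-\cdots-\ell$ ($\alpha_\ell$ short in $B_\ell$, long in $C_\ell$); $D_\ell$: chain $1-\cdots-(\ell-1)$ plus edge $(\ell-2)-\ell$; $E_\ell$: chain $1-2-3-5-\cdots-\ell$ plus edge $3-4$; $F_4$: chain $1-2-3-4$, $\alpha_1,\alpha_2$ long; $G_2$: $\alpha_2$ long. $d_i=(\alpha_i,\alpha_i)/2$: $1$ in types $A,D,E$; $(1,\dots,1,\frac12)$ for $B_\ell$; $(1,\dots,1,2)$ for $C_\ell$;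 $(1,1,\frac12,\frac12)$ for $F_4$; $(1,3)$ for $G_2$; $d=\min d_i$, $d'=\max d_i$. Let $m$ be an integer, $m>1$, $m>\ell-1$. Quiver $Q_m(\mathfrak g)$ on $\{v^i_n: i\in S, n\in d\mathbb Z/d'm\mathbb Z\}$ with arrows (indices mod $d'm$): (simply-laced) orient Dynkin edges from larger to smaller label ($C(\mathfrak g)$); $v^i_n\to v^i_{n+1}$, and for each $i\to j$ in $C(\mathfrak g)$, $v^i_n\to v^j_n$ and $v^j_{n+1}\to v^i_n$. ($B_\ell$) $v^i_n\to v^i_{n+1}$ ($i\le\ell-1$); $v^i_n\to v^{i-1}_n$, $v^{i-1}_{n+1}\to v^i_n$ ($2\le i\le\ell-1$); $v^\ell_n\to v^\ell_{n+1/2}$, $v^\ell_n\to v^{\ell-1}_{n-1/2}$, $v^{\ell-1}_{n+1/2}\to v^\ell_n$. ($C_\ell$) $v^i_n\to v^i_{n+1}$ ($i\le\ell-1$); $v^i_n\to v^{i-1}_n$, $v^{i-1}_{n+1}\to v^i_n$ ($2\le i\le\ell-1$); $v^\ell_n\to v^\ell_{n+2}$, $v^\ell_n\to v^{\ell-1}_n$, $v^{\ell-1}_{n+2}\to v^\ell_n$. ($F_4$) $v^i_n\to v^i_{n+1}$ ($i=1,2$); $v^2_n\to v^1_n$, $v^1_{n+1}\to v^2_n$; $v^3_n\to v^3_{n+1/2}$, $v^3_n\to v^2_{n-1/2}$, $v^2_{n+1/2}\to v^3_n$; $v^4_n\to v^4_{n+1/2}$, $v^4_n\to v^3_n$, $v^3_{n+1/2}\to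 v^4_n$. ($G_2$) $v^1_n\to v^1_{n+1}$, $v^2_n\to v^2_{n+3}$, $v^2_n\to v^1_n$, $v^1_{n+3}\to v^2_n$. $\mathbb C(y)$ is the field of rational functions in $y_i(n)$, $i\in S$, $n\in d\mathbb Z/d'm\mathbb Z$; $a_i(n)=y_i(n)y_i(n+d_i)/F(i,n)$ with $F(i,n)=\prod_{j:\,v^i_n\to v^j_n}y_j(n+d_j)\prod_{j:\,v^j_n\to v^i_n}y_j(n)$, except $F(i,n)=y_{i-1}(n+\frac12)y_{i+1}(n)$ for $i=\ell$ in $B_\ell$ and $i=3$ in $F_4$; $F(i,n)=y_{i-1}(n+1)y_{i+1}(n)y_{i+1}(n+\frac12)$ for $i=\ell-1$ in $B_\ell$ and $i=2$ in $F_4$; $F(\ell,n)=y_{\ell-1}(n+1)y_{\ell-1}(n+2)$ in $C_\ell$; $F(2,n)=y_1(n+1)y_1(n+2)y_1(n+3)$ in $G_2$; with $y_0:=y_{\ell+1}:=1$. $f_y(i,n)=1+\sum_{k=0}^{d'm/d_i-2}(a_i(n)a_i(n-d_i)\cdots a_i(n-kd_i))^{-1}$, and $r_i$ is the field endomorphism of $\mathbb C(y)$ with $r_i(y_i(n))=\frac{f_y(i,n-2d_i)}{f_y(i,n-d_i)}\frac{F(i,n-d_i)}{y_i(n-d_i)}$, $r_i(y_j(n))=y_j(n)$ for $j\ne i$. These $r_i$ generate an action of the Weyl group $W(\mathfrak g)$ on $\mathbb C(y)$. *)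

theory Defs
  imports Complex_Main "HOL-Library.Poly_Mapping" "HOL-Library.Product_Lexorder"
    "HOL-Computational_Algebra.Fraction_Field"
begin

datatype ctype = TA nat | TB nat | TC nat | TD nat | TE nat | TF4 | TG2

fun rank :: "ctype \<Rightarrow> nat" where
  "rank (TA l) = l" | "rank (TB l) = l" | "rank (TC l) = l" | "rank (TD l) = l"
| "rank (TE l) = l" | "rank TF4 = 4" | "rank TG2 = 2"

fun valid :: "ctype \<Rightarrow> bool" where
  "valid (TA l) = (l \<ge> 1)" | "valid (TB l) = (l \<ge> 2)" | "valid (TC l) = (l \<ge> 2)"
| "valid (TD l) = (l \<ge> 4)" | "valid (TE l) = (l \<in> {6,7,8})"
| "valid TF4 = True" | "valid TG2 = True"

definition Sset :: "ctype \<Rightarrow> nat set" where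
  "Sset g = {1..rank g}"

fun di :: "ctype \<Rightarrow> nat \<Rightarrow> rat" where
  "di (TB l) i = (if i = l then 1/2 else 1)"
| "di (TC l) i = (if i = l then 2 else 1)"
| "di TF4 i = (if i \<le> 2 then 1 else 1/2)"
| "di TG2 i = (if i = 2 then 3 else 1)"
| "di _ i = 1"

definition dmin :: "ctype \<Rightarrow> rat" where
  "dmin g = Min (di g ` Sset g)"

definition dmax :: "ctype \<Rightarrow> rat" where
  "dmax g = Max (di g ` Sset g)"

text \<open>The index set d Z (all representatives; indices are taken modulo d' m).\<close>
definition dpts :: "ctype \<Rightarrow> rat set" where
  "dpts g = {n. \<exists>k::int. n = of_int k * dmin g}"

definition cong_dm :: "ctype \<Rightarrow> nat \<Rightarrow> rat \<Rightarrow> rat \<Rightarrow> bool" where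
  "cong_dm g m a b = (\<exists>k::int. a - b = of_int k * (dmax g * of_nat m))"

fun dedge :: "ctype \<Rightarrow> nat \<Rightarrow> nat \<Rightarrow> bool" where
  "dedge (TA l) i j = (i \<in> {1..l} \<and> j \<in> {1..l} \<and> (i = j + 1 \<or> j = i + 1))"
| "dedge (TD l) i j =
     ((i \<in> {1..l-1} \<and> j \<in> {1..l-1} \<and> (i = j + 1 \<or> j = i + 1))
      \<or> (i = l - 2 \<and> j = l) \<or> (i = l \<and> j = l - 2))"
| "dedge (TE l) i j =
     (let e = (\<lambda>a b. (a = 1 \<and> b = 2) \<or> (a = 2 \<and> b = 3) \<or> (a = 3 \<and> b = 5)
                    \<or> (a = 3 \<and> b = 4) \<or> (5 \<le> a \<and> b = a + 1 \<and> b \<le> l))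
      in e i j \<or> e j i)"
| "dedge _ i j = False"

definition carrow :: "ctype \<Rightarrow> nat \<Rightarrow> nat \<Rightarrow> bool" where
  "carrow g i j = (dedge g i j \<and> i > j)"

text \<open>Raw arrows of the quiver with exact (unreduced) second indices:
  qarrow g (i,n) (j,n') means v^i_n \<rightarrow> v^j_n'.\<close>
fun qarrow :: "ctype \<Rightarrow> nat \<times> rat \<Rightarrow> nat \<times> rat \<Rightarrow> bool" where
  "qarrow (TB l) (i, n) (j, n') =
     ((1 \<le> i \<and> i \<le> l - 1 \<and> j = i \<and> n' = n + 1)
    \<or> (2 \<le> i \<and> i \<le> l - 1 \<and> j = i - 1 \<and> n' = n)
    \<or> (2 \<le> j \<and> j \<le> l - 1 \<and> i = j - 1 \<and> n = n' + 1)
    \<or> (i = l \<and> j = l \<and> n' = n + 1/2)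
    \<or> (i = l \<and> j = l - 1 \<and> n' = n - 1/2)
    \<or> (i = l - 1 \<and> j = l \<and> n = n' + 1/2))"
| "qarrow (TC l) (i, n) (j, n') =
     ((1 \<le> i \<and> i \<le> l - 1 \<and> j = i \<and> n' = n + 1)
    \<or> (2 \<le> i \<and> i \<le> l - 1 \<and> j = i - 1 \<and> n' = n)
    \<or> (2 \<le> j \<and> j \<le> l - 1 \<and> i = j - 1 \<and> n = n' + 1)
    \<or> (i = l \<and> j = l \<and> n' = n + 2)
    \<or> (i = l \<and> j = l - 1 \<and> n' = n)
    \<or> (i = l - 1 \<and> j = l \<and> n = n' + 2))"
| "qarrow TF4 (i, n) (j, n') =
     ((i \<in> {1,2} \<and> j = i \<and> n' = n + 1)
    \<or> (i = 2 \<and> j = 1 \<and> n' = n)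
    \<or> (i = 1 \<and> j = 2 \<and> n = n' + 1)
    \<or> (i = 3 \<and> j = 3 \<and> n' = n + 1/2)
    \<or> (i = 3 \<and> j = 2 \<and> n' = n - 1/2)
    \<or> (i = 2 \<and> j = 3 \<and> n = n' + 1/2)
    \<or> (i = 4 \<and> j = 4 \<and> n' = n + 1/2)
    \<or> (i = 4 \<and> j = 3 \<and> n' = n)
    \<or> (i = 3 \<and> j = 4 \<and> n = n' + 1/2))"
| "qarrow TG2 (i, n) (j, n') =
     ((i = 1 \<and> j = 1 \<and> n' = n + 1)
    \<or> (i = 2 \<and> j = 2 \<and> n' = n + 3)
    \<or> (i = 2 \<and> j = 1 \<and> n' = n)
    \<or> (i = 1 \<and> j = 2 \<and> n = n' + 3))"
| "qarrow g (i, n) (j, n') =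
     ((i \<in> Sset g \<and> j = i \<and> n' = n + 1)
    \<or> (carrow g i j \<and> n' = n)
    \<or> (carrow g j i \<and> n = n' + 1))"

definition Qarrow :: "ctype \<Rightarrow> nat \<Rightarrow> nat \<times> rat \<Rightarrow> nat \<times> rat \<Rightarrow> bool" where
  "Qarrow g m v w =
     (fst v \<in> Sset g \<and> fst w \<in> Sset g \<and> snd v \<in> dpts g \<and> snd w \<in> dpts g
      \<and> (\<exists>n''. qarrow g v (fst w, n'') \<and> cong_dm g m n'' (snd w)))"

text \<open>C(y) is realised inside the fraction field of the polynomial ring over C in
  indeterminates indexed by nat \<times> nat; y_i(n) is the indeterminate (i, k) where
  n = k d with k reduced modulo d'm/d.\<close>

type_synonym cpoly = "((nat \<times> nat) \<Rightarrow>\<^sub>0 nat) \<Rightarrow>\<^sub>0 complex"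
type_synonym cy = "cpoly fract"

definition const :: "complex \<Rightarrow> cy" where
  "const c = Fract (Poly_Mapping.single 0 c) 1"

definition npts :: "ctype \<Rightarrow> nat \<Rightarrow> int" where
  "npts g m = \<lfloor>dmax g * of_nat m / dmin g\<rfloor>"

definition Y :: "ctype \<Rightarrow> nat \<Rightarrow> nat \<Rightarrow> rat \<Rightarrow> cy" where
  "Y g m i n = Fract (Poly_Mapping.single
       (Poly_Mapping.single (i, nat (\<lfloor>n / dmin g\<rfloor> mod npts g m)) 1) 1) 1"

text \<open>y_i(n) with the convention y_0 = y_(l+1) = 1.\<close>
definition Y0 :: "ctype \<Rightarrow> nat \<Rightarrow> nat \<Rightarrow> rat \<Rightarrow> cy" where
  "Y0 g m i n = (if i \<in> Sset g then Y g m i n else 1)"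

definition Fgen :: "ctype \<Rightarrow> nat \<Rightarrow> nat \<Rightarrow> rat \<Rightarrow> cy" where
  "Fgen g m i n =
     (\<Prod>j\<in>{j\<in>Sset g. Qarrow g m (i, n) (j, n)}. Y g m j (n + di g j))
   * (\<Prod>j\<in>{j\<in>Sset g. Qarrow g m (j, n) (i, n)}. Y g m j n)"

fun Fy :: "ctype \<Rightarrow> nat \<Rightarrow> nat \<Rightarrow> rat \<Rightarrow> cy" where
  "Fy (TB l) m i n =
     (if i = l then Y0 (TB l) m (i - 1) (n + 1/2) * Y0 (TB l) m (i + 1) n
      else if i = l - 1 then Y0 (TB l) m (i - 1) (n + 1) * Y0 (TB l) m (i + 1) n
                              * Y0 (TB l) m (i + 1) (n + 1/2)
      else Fgen (TB l) m i n)"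
| "Fy TF4 m i n =
     (if i = 3 then Y0 TF4 m (i - 1) (n + 1/2) * Y0 TF4 m (i + 1) n
      else if i = 2 then Y0 TF4 m (i - 1) (n + 1) * Y0 TF4 m (i + 1) n
                              * Y0 TF4 m (i + 1) (n + 1/2)
      else Fgen TF4 m i n)"
| "Fy (TC l) m i n =
     (if i = l then Y0 (TC l) m (l - 1) (n + 1) * Y0 (TC l) m (l - 1) (n + 2)
      else Fgen (TC l) m i n)"
| "Fy TG2 m i n =
     (if i = 2 then Y TG2 m 1 (n + 1) * Y TG2 m 1 (n + 2) * Y TG2 m 1 (n + 3)
      else Fgen TG2 m i n)"
| "Fy g m i n = Fgen g m i n"

definition a :: "ctype \<Rightarrow> nat \<Rightarrow> nat \<Rightarrow> rat \<Rightarrow> cy" where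
  "a g m i n = Y g m i n * Y g m i (n + di g i) / Fy g m i n"

definition X :: "ctype \<Rightarrow> nat \<Rightarrow> nat \<Rightarrow> rat \<Rightarrow> cy" where
  "X g m i n = inverse (a g m i n)"

definition fy :: "ctype \<Rightarrow> nat \<Rightarrow> nat \<Rightarrow> rat \<Rightarrow> cy" where
  "fy g m i n = 1 + (\<Sum>k = 0..nat \<lfloor>dmax g * of_nat m / di g i\<rfloor> - 2.
                       inverse (\<Prod>t = 0..k. a g m i (n - of_nat t * di g i)))"

definition r_val :: "ctype \<Rightarrow> nat \<Rightarrow> nat \<Rightarrow> rat \<Rightarrow> cy" where
  "r_val g m i n = fy g m i (n - 2 * di g i) / fy g m i (n - di g i)
                   * (Fy g m i (n - di g i) / Y g m i (n - di g i))"

inductive_set subring_gen :: "'a::comm_ring_1 set \<Rightarrow> 'a set" for G where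
  gen: "x \<in> G \<Longrightarrow> x \<in> subring_gen G"
| one: "1 \<in> subring_gen G"
| add: "x \<in> subring_gen G \<Longrightarrow> y \<in> subring_gen G \<Longrightarrow> x + y \<in> subring_gen G"
| neg: "x \<in> subring_gen G \<Longrightarrow> - x \<in> subring_gen G"
| mult: "x \<in> subring_gen G \<Longrightarrow> y \<in> subring_gen G \<Longrightarrow> x * y \<in> subring_gen G"

definition Ychi :: "ctype \<Rightarrow> nat \<Rightarrow> cy set" where
  "Ychi g m = (\<Inter>i\<in>Sset g. subring_gen
      ({Y g m j n | j n. j \<in> Sset g \<and> j \<noteq> i \<and> n \<in> dpts g}
     \<union> {inverse (Y g m j n) | j n. j \<in> Sset g \<and> j \<noteq> i \<and> n \<in> dpts g}
     \<union> {Y g m i n * (1 + X g m i n) | n. n \<in> dpts g}))"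

end

theory Submission
  imports Defs
begin

(* The quiver Q_m(g) has no loops, so F(i,n) does not involve y_i and is fixed by r; hence r
   fixes all generators y_j(n)^(+-1), j ~= i, of the i-th subring, and it remains to see that r
   fixes y_i(n) (1 + X^i_n) = y_i(n) + F(i,n) / y_i(n + d_i).
   Put u_k = X^i_(n - k d_i). This sequence is periodic of period N = d'm / d_i, and
   f_y(i, n - j d_i) is the cyclic sum of the products u_j ... u_(j+k-1) over k < N. Such cyclic
   sums satisfy u_1 f_y(i, n - 2 d_i) + f_y(i, n) = (1 + u_0) f_y(i, n - d_i), and this relation
   turns r(y_i(n)) + F(i,n) / r(y_i(n + d_i)) back into y_i(n) (1 + X^i_n). The f_y occurring
   as denominators are nonzero because a ring endomorphism of a field cannot send y_i(n) to 0. *)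

lemma dmin_eq: "valid g \<Longrightarrow> dmin g = (case g of TB _ \<Rightarrow> 1/2 | TF4 \<Rightarrow> 1/2 | _ \<Rightarrow> 1)"
  unfolding dmin_def Sset_def
  by (rule Min_eqI; cases g) (auto intro: rev_image_eqI[of 1] rev_image_eqI[of 3])

lemma dmax_eq: "valid g \<Longrightarrow> dmax g = (case g of TC _ \<Rightarrow> 2 | TG2 \<Rightarrow> 3 | _ \<Rightarrow> 1)"
  unfolding dmax_def Sset_def
  by (rule Max_eqI; cases g) (auto intro: rev_image_eqI[of 1] rev_image_eqI[of 2])

lemma dmin_pos: "valid g \<Longrightarrow> dmin g > 0"
  by (cases g) (auto simp: dmin_eq)

lemma dmax_pos: "valid g \<Longrightarrow> dmax g > 0"
  by (cases g) (auto simp: dmax_eq)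

lemma di_pos: "valid g \<Longrightarrow> di g i > 0"
  by (cases g) auto

lemma di_in_dpts: "valid g \<Longrightarrow> di g i \<in> dpts g"
  unfolding dpts_def by (cases g) (auto simp: dmin_eq intro: exI[of _ 1] exI[of _ 2] exI[of _ 3] exI[of _ 4])

lemma dpts_add: "p \<in> dpts g \<Longrightarrow> q \<in> dpts g \<Longrightarrow> p + q \<in> dpts g"
  unfolding dpts_def by (auto simp: distrib_right[symmetric] intro: exI[of _ "_ + _"])

lemma dmax_eq_of_nat_mult_di:
  "valid g \<Longrightarrow> i \<in> Sset g \<Longrightarrow> \<exists>c::nat. c \<ge> 1 \<and> dmax g = of_nat c * di g i"
  by (cases g) (auto simp: dmax_eq Sset_def)

lemma dmax_eq_of_nat_mult_dmin: "valid g \<Longrightarrow> \<exists>c::nat. dmax g = of_nat c * dmin g"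
  by (cases g) (auto simp: dmax_eq dmin_eq)

lemma nat_floor_dmax_div_di:
  assumes "valid g" "i \<in> Sset g" "m \<ge> 2" and N: "N = nat \<lfloor>dmax g * of_nat m / di g i\<rfloor>"
  shows "N \<ge> 2" and "of_nat N * di g i = dmax g * of_nat m"
proof -
  obtain c :: nat where c: "c \<ge> 1" "dmax g = of_nat c * di g i"
    using dmax_eq_of_nat_mult_di[OF assms(1,2)] by blast
  have "dmax g * of_nat m / di g i = of_nat (c * m)"
    using c di_pos[OF assms(1), of i] by simp
  then have N_eq: "N = c * m" unfolding N by (simp only: floor_of_nat nat_int)
  have "m \<le> c * m" using c by simp
  then show "N \<ge> 2" using N_eq assms(3) by linarith
  show "of_nat N * di g i = dmax g * of_nat m" using N_eq c by simp
qed

lemma npts_eq: "valid g \<Longrightarrow> dmax g = of_nat c * dmin g \<Longrightarrow> npts g m = int (c * m)"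
  unfolding npts_def using dmin_pos[of g] by (simp flip: of_nat_mult)

lemma Y_period:
  assumes v: "valid g"
  shows "Y g m j (n + of_int k * (dmax g * of_nat m)) = Y g m j n"
proof -
  obtain c :: nat where c: "dmax g = of_nat c * dmin g" using dmax_eq_of_nat_mult_dmin[OF v] by blast
  have "(n + of_int k * (dmax g * of_nat m)) / dmin g = n / dmin g + of_int (k * int (c * m))"
    using dmin_pos[OF v] by (simp add: c field_simps)
  then have "\<lfloor>(n + of_int k * (dmax g * of_nat m)) / dmin g\<rfloor> = \<lfloor>n / dmin g\<rfloor> + k * int (c * m)"
    by (simp only: floor_add_int)
  then show ?thesis unfolding Y_def using npts_eq[OF v c, of m] by simp
qed

lemma Y_eq_Y_dpts: "valid g \<Longrightarrow> \<exists>n'\<in>dpts g. Y g m j n = Y g m j n'"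
  using dmin_pos[of g] by (auto simp: Y_def dpts_def intro!: bexI[of _ "of_int \<lfloor>n / dmin g\<rfloor> * dmin g"])

lemma qarrow_shift: "qarrow g (i, n + c) (j, n' + c) = qarrow g (i, n) (j, n')"
  by (cases g) auto

lemma Qarrow_period:
  assumes "valid g"
  shows "Qarrow g m (i, n + of_int k * (dmax g * of_nat m)) (j, n + of_int k * (dmax g * of_nat m))
       = Qarrow g m (i, n) (j, n)"
proof -
  define P where "P = of_int k * (dmax g * of_nat m)"
  obtain c :: nat where c: "dmax g = of_nat c * dmin g"
    using dmax_eq_of_nat_mult_dmin[OF assms] by blast
  have "P \<in> dpts g" "- P \<in> dpts g"
    unfolding dpts_def P_def c by (auto intro: exI[of _ "k * int c * int m"] exI[of _ "- k * int c * int m"])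
  then have "n + P \<in> dpts g \<longleftrightarrow> n \<in> dpts g"
    using dpts_add[of "n + P" g "- P"] dpts_add[of n g P] by auto
  moreover have "cong_dm g m (n'' + P) (n + P) \<longleftrightarrow> cong_dm g m n'' n" for n''
    by (simp add: cong_dm_def)
  moreover have "(\<exists>n''. qarrow g (i, n + P) (j, n'') \<and> cong_dm g m n'' (n + P))
              \<longleftrightarrow> (\<exists>n''. qarrow g (i, n + P) (j, n'' + P) \<and> cong_dm g m (n'' + P) (n + P))"
    by (metis add_diff_cancel diff_add_cancel)
  ultimately show ?thesis
    unfolding Qarrow_def P_def[symmetric] by (simp add: qarrow_shift)
qed

lemma Fy_period:
  assumes "valid g"
  shows "Fy g m i (n + of_int k * (dmax g * of_nat m)) = Fy g m i n"
proof -
  define P where "P = of_int k * (dmax g * of_nat m)"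
  have Y: "Y g m j (x + P) = Y g m j x" for j x
    unfolding P_def by (rule Y_period[OF assms])
  have Y_shift: "Y g m j (x + P + e) = Y g m j (x + e)" for j x e
    using Y[of j "x + e"] by (simp add: algebra_simps)
  have "Fgen g m i (n + P) = Fgen g m i n"
    unfolding Fgen_def P_def Qarrow_period[OF assms] unfolding P_def[symmetric] Y Y_shift ..
  then show ?thesis
    unfolding P_def[symmetric] using Y Y_shift by (cases g) (simp_all add: Y0_def)
qed

lemma X_period:
  assumes "valid g" "i \<in> Sset g" "m \<ge> 2" "N = nat \<lfloor>dmax g * of_nat m / di g i\<rfloor>"
  shows "X g m i (n - of_nat N * di g i) = X g m i n"
proof -
  have "n - of_nat N * di g i = n + of_int (-1) * (dmax g * of_nat m)"
    using nat_floor_dmax_div_di(2)[OF assms] by simp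
  moreover have "n + of_int (-1) * (dmax g * of_nat m) + di g i
               = (n + di g i) + of_int (-1) * (dmax g * of_nat m)"
    by simp
  ultimately show ?thesis
    unfolding X_def a_def by (simp only: Y_period[OF assms(1)] Fy_period[OF assms(1)])
qed

lemma qarrow_loop_bounds: "valid g \<Longrightarrow> qarrow g (i, n) (i, n') \<Longrightarrow> 0 < n' - n \<and> n' - n \<le> dmax g"
  by (cases g) (auto simp: dmax_eq carrow_def)

lemma Qarrow_irrefl:
  assumes "valid g" "m \<ge> 2"
  shows "\<not> Qarrow g m (i, n) (i, n)"
proof
  assume "Qarrow g m (i, n) (i, n)"
  then obtain n'' k where q: "qarrow g (i, n) (i, n'')"
    and k: "n'' - n = of_int (k * int m) * dmax g"
    unfolding Qarrow_def cong_dm_def by (auto simp: algebra_simps)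
  define K where "K = k * int m"
  have "0 < of_int K * dmax g" "of_int K * dmax g \<le> 1 * dmax g"
    using qarrow_loop_bounds[OF assms(1) q] k unfolding K_def by simp_all
  then have "K = 1"
    using dmax_pos[OF assms(1)] by (simp add: zero_less_mult_iff mult_le_cancel_right)
  then show False
    using assms(2) unfolding K_def by (simp add: zmult_eq_1_iff)
qed

locale field_endo =
  fixes r :: "'a::field \<Rightarrow> 'a"
  assumes hom_add: "r (x + y) = r x + r y"
    and hom_mult: "r (x * y) = r x * r y"
    and hom_one: "r 1 = 1"
begin

lemma hom_zero: "r 0 = 0"
  using hom_add[of 0 0] by (metis add_cancel_right_right)

lemma hom_uminus: "r (- x) = - r x"
  using hom_add[of x "- x"] hom_zero by (metis add.right_inverse minus_unique)

lemma hom_inverse: "r (inverse x) = inverse (r x)"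
proof (cases "x = 0")
  case True
  then show ?thesis by (simp add: hom_zero)
next
  case False
  then have "r x * r (inverse x) = 1" by (simp flip: hom_mult add: hom_one)
  then show ?thesis by (simp add: inverse_unique)
qed

lemma hom_divide: "r (x / y) = r x / r y"
  by (simp add: divide_inverse hom_mult hom_inverse)

lemma hom_nonzero: "x \<noteq> 0 \<Longrightarrow> r x \<noteq> 0"
  using hom_mult[of x "inverse x"] hom_one by auto

lemma hom_prod: "r (prod h A) = (\<Prod>a\<in>A. r (h a))"
  by (induction A rule: infinite_finite_induct) (simp_all add: hom_one hom_mult)

lemma fixes_subring_gen:
  assumes "\<And>x. x \<in> G \<Longrightarrow> r x = x" and "x \<in> subring_gen G"
  shows "r x = x"
  using assms(2) by induction (simp_all add: assms(1) hom_one hom_add hom_uminus hom_mult)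

end

lemma single_one_neq_zero: "Poly_Mapping.single k (1::'b::zero_neq_one) \<noteq> 0"
  by (metis lookup_single_eq lookup_zero one_neq_zero)

lemma Y_nonzero: "Y g m i n \<noteq> 0"
  unfolding Y_def Zero_fract_def by (subst eq_fract(1)) (auto simp: single_one_neq_zero)

lemma Fy_fixed:
  assumes r: "field_endo r" and v: "valid g" and m: "m \<ge> 2" and i: "i \<in> Sset g"
    and fixed: "\<And>j n. j \<in> Sset g \<Longrightarrow> j \<noteq> i \<Longrightarrow> r (Y g m j n) = Y g m j n"
  shows "r (Fy g m i n) = Fy g m i n"
proof -
  interpret field_endo r by (rule r)
  have Y0_fixed: "j \<noteq> i \<Longrightarrow> r (Y0 g m j x) = Y0 g m j x" for j x
    using fixed hom_one by (simp add: Y0_def)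
  have Fgen_fixed: "r (Fgen g m i n) = Fgen g m i n"
    unfolding Fgen_def hom_mult hom_prod
    using fixed Qarrow_irrefl[OF v m] by (intro arg_cong2[where f = "(*)"] prod.cong) auto
  have "1 \<le> i" using i by (simp add: Sset_def)
  then show ?thesis
  proof (cases g)
    case (TC l)
    then have "l \<ge> 2" using v by simp
    then show ?thesis using Fgen_fixed Y0_fixed \<open>1 \<le> i\<close> unfolding TC
      by (simp add: hom_mult if_distrib[of r])
  next
    case TG2
    have "i = 2 \<Longrightarrow> r (Y TG2 m 1 x) = Y TG2 m 1 x" for x
      using fixed[of 1] unfolding TG2 by (simp add: Sset_def)
    then show ?thesis using Fgen_fixed unfolding TG2 by (cases "i = 2") (simp_all add: hom_mult)
  qed (use Fgen_fixed Y0_fixed in \<open>simp_all add: hom_mult if_distrib[of r]\<close>)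
qed

lemma cyclic_sum_prod_recurrence:
  fixes u :: "nat \<Rightarrow> 'a::comm_ring_1"
  assumes "u N = u 0"
  shows "u 1 * (\<Sum>k<N. \<Prod>t<k. u (2 + t)) + (\<Sum>k<N. \<Prod>t<k. u t)
       = (1 + u 0) * (\<Sum>k<N. \<Prod>t<k. u (1 + t))"
proof -
  define q where "q j k = (\<Prod>t<k. u (j + t))" for j k
  have q_Suc: "u j * q (Suc j) k = q j (Suc k)" for j k
    unfolding q_def by (subst prod.lessThan_Suc_shift) simp
  have sum_shift: "(\<Sum>k<N. q j (Suc k)) = (\<Sum>k<N. q j k) - 1 + q j N" for j
    by (induction N) (simp_all add: q_def)
  have "q 1 N = q 0 N"
  proof (cases N)
    case (Suc M)
    have "q 0 (Suc M) = u 0 * (\<Prod>t<M. u (Suc t))"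
      unfolding q_def by (subst prod.lessThan_Suc_shift) simp
    moreover have "q 1 (Suc M) = (\<Prod>t<M. u (Suc t)) * u (Suc M)"
      unfolding q_def by simp
    ultimately show ?thesis using assms Suc by (simp add: mult.commute)
  qed (simp add: q_def)
  moreover have "u 1 * (\<Sum>k<N. q 2 k) = (\<Sum>k<N. q 1 (Suc k))"
    using q_Suc[of 1] by (simp add: sum_distrib_left numeral_2_eq_2)
  moreover have "u 0 * (\<Sum>k<N. q 1 k) = (\<Sum>k<N. q 0 (Suc k))"
    using q_Suc[of 0] by (simp add: sum_distrib_left)
  ultimately have "u 1 * (\<Sum>k<N. q 2 k) + (\<Sum>k<N. q 0 k) = (1 + u 0) * (\<Sum>k<N. q 1 k)"
    by (simp add: distrib_right sum_shift)
  then show ?thesis unfolding q_def by simp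
qed

lemma fy_eq_cyclic_sum:
  assumes "N = nat \<lfloor>dmax g * of_nat m / di g i\<rfloor>" "N \<ge> 2"
  shows "fy g m i (n - of_nat j * di g i) = (\<Sum>k<N. \<Prod>t<k. X g m i (n - of_nat (j + t) * di g i))"
proof -
  define h where "h k = (\<Prod>t<k. X g m i (n - of_nat (j + t) * di g i))" for k
  have "inverse (\<Prod>t = 0..k. a g m i (n - of_nat j * di g i - of_nat t * di g i)) = h (Suc k)" for k
    unfolding h_def X_def prod_inversef[symmetric]
    by (intro prod.cong) (auto simp: algebra_simps atLeast0AtMost lessThan_Suc_atMost)
  moreover have "{0..N - 2} = {..<N - 1}" using assms(2) by auto
  ultimately have "fy g m i (n - of_nat j * di g i) = 1 + (\<Sum>k<N - 1. h (Suc k))"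
    unfolding fy_def assms(1)[symmetric] by simp
  also have "\<dots> = (\<Sum>k<Suc (N - 1). h k)"
    by (subst sum.lessThan_Suc_shift) (simp add: h_def)
  finally show ?thesis using assms(2) unfolding h_def by simp
qed

lemma generator_fixed:
  assumes r: "field_endo r" and v: "valid g" and m: "m \<ge> 2" and i: "i \<in> Sset g"
    and n: "n \<in> dpts g"
    and r_Y: "\<forall>n\<in>dpts g. r (Y g m i n) = r_val g m i n"
    and fixed: "\<And>j n. j \<in> Sset g \<Longrightarrow> j \<noteq> i \<Longrightarrow> r (Y g m j n) = Y g m j n"
  shows "r (Y g m i n * (1 + X g m i n)) = Y g m i n * (1 + X g m i n)"
proof -
  interpret field_endo r by (rule r)
  define d where "d = di g i"
  define N where "N = nat \<lfloor>dmax g * of_nat m / di g i\<rfloor>"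
  define u where "u k = X g m i (n - of_nat k * d)" for k
  define y y' y'' where "y = Y g m i n" and "y' = Y g m i (n + d)" and "y'' = Y g m i (n - d)"
  define F F' where "F = Fy g m i n" and "F' = Fy g m i (n - d)"
  define f f' f'' where "f = fy g m i n" and "f' = fy g m i (n - d)" and "f'' = fy g m i (n - 2 * d)"
  have N: "N \<ge> 2" using nat_floor_dmax_div_di(1)[OF v i m N_def] .
  have periodic: "u N = u 0" unfolding u_def d_def using X_period[OF v i m N_def] by simp
  have sum: "(\<Sum>k<N. \<Prod>t<k. u (j + t)) = fy g m i (n - of_nat j * d)" for j
    unfolding u_def d_def using fy_eq_cyclic_sum[OF N_def N] by simp
  have recurrence: "u 1 * f'' + f = (1 + u 0) * f'"
    using cyclic_sum_prod_recurrence[OF periodic] sum[of 2] sum[of 1] sum[of 0]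
    unfolding f_def f'_def f''_def by simp
  have u0: "u 0 = F / (y * y')" and u1: "u 1 = F' / (y'' * y)"
    unfolding u_def X_def a_def d_def y_def y'_def y''_def F_def F'_def by simp_all
  have "n + d \<in> dpts g" unfolding d_def using dpts_add[OF n di_in_dpts[OF v]] .
  then have r_y: "r y = f'' / f' * (F' / y'')" and r_y': "r y' = f' / f * (F / y)"
    using r_Y n unfolding r_val_def y_def y'_def y''_def F_def F'_def f_def f'_def f''_def d_def
    by simp_all
  have "r y \<noteq> 0" "r y' \<noteq> 0" unfolding y_def y'_def by (simp_all add: hom_nonzero Y_nonzero)
  then have nonzero: "f'' \<noteq> 0" "f' \<noteq> 0" "F' \<noteq> 0" "f \<noteq> 0" "F \<noteq> 0"
    unfolding r_y r_y' by auto
  have "y \<noteq> 0" "y'' \<noteq> 0" unfolding y_def y''_def by (simp_all add: Y_nonzero)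
  have "r (Y g m i n * (1 + X g m i n)) = r y + F / r y'"
    using \<open>r y \<noteq> 0\<close> \<open>r y' \<noteq> 0\<close> Fy_fixed[OF r v m i fixed, of n]
    unfolding X_def a_def y_def y'_def F_def d_def
    by (simp add: hom_mult hom_add hom_one hom_inverse hom_divide Y_nonzero field_simps)
  also have "\<dots> = y * (u 1 * f'' + f) / f'"
    unfolding r_y r_y' u1 using nonzero \<open>y \<noteq> 0\<close> \<open>y'' \<noteq> 0\<close> by (simp add: field_simps)
  also have "\<dots> = y * (1 + u 0)"
    unfolding recurrence using nonzero by simp
  finally show ?thesis
    unfolding u0 X_def a_def y_def y'_def F_def d_def by simp
qed

theorem proposition4p13:
  fixes g :: ctype and m :: nat and i :: nat and r :: "cy \<Rightarrow> cy" and f :: cy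
  assumes "valid g" and "m > 1" and "int m > int (rank g) - 1"
    and "i \<in> Sset g"
    and "\<forall>x y. r (x + y) = r x + r y"
    and "\<forall>x y. r (x * y) = r x * r y"
    and "r 1 = 1"
    and "\<forall>c. r (const c) = const c"
    and "\<forall>n\<in>dpts g. r (Y g m i n) = r_val g m i n"
    and "\<forall>j\<in>Sset g. j \<noteq> i \<longrightarrow> (\<forall>n\<in>dpts g. r (Y g m j n) = Y g m j n)"
    and "f \<in> Ychi g m"
  shows "r f = f"
proof -
  interpret field_endo r
    using assms(5-7) by unfold_locales blast+
  have m: "m \<ge> 2" using assms(2) by simp
  have fixed: "r (Y g m j n) = Y g m j n" if "j \<in> Sset g" "j \<noteq> i" for j n
    using Y_eq_Y_dpts[OF assms(1), of m j n] assms(10) that by metis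
  show ?thesis
    using INT_D[OF assms(11)[unfolded Ychi_def] assms(4)]
    by (rule fixes_subring_gen[rotated])
      (auto simp: fixed hom_inverse
        intro: generator_fixed[OF field_endo_axioms assms(1) m assms(4) _ assms(9) fixed])
qed

end
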